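(* Let $R$ be a commutative ring. An ideal $I$ of $R$ is 2-absorbing if and only if it is strongly 2-absorbing.
   Context: All rings are commutative with identity $1\neq 0$. An ideal $I$ of $R$ is 2-absorbing if whenever $a,b,c\in R$ and $abc\in I$, then $ab\in I$ or $ac\in I$ or $bc\in I$. An ideal $I$ of $R$ is strongly 2-absorbing if whenever $I_1,I_2,I_3$ are ideals of $R$ with $I_1I_2I_3\subseteq I$, then $I_1I_2\subseteq I$ or $I_1I_3\subseteq I$ or $I_2I_3\subseteq I$. *)

theory Defs
  imports "HOL-Algebra.Ideal_Product"
begin

definition two_absorbing_ideal :: "('a, 'b) ring_scheme \<Rightarrow> 'a set \<Rightarrow> bool" where
  "two_absorbing_ideal R I \<longleftrightarrow> ideal I R \<and>
     (\<forall>a \<in> carrier R. \<forall>b \<in> carrier R. \<forall>c \<in> carrier R.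
        a \<otimes>\<^bsub>R\<^esub> b \<otimes>\<^bsub>R\<^esub> c \<in> I \<longrightarrow>
        a \<otimes>\<^bsub>R\<^esub> b \<in> I \<or> a \<otimes>\<^bsub>R\<^esub> c \<in> I \<or> b \<otimes>\<^bsub>R\<^esub> c \<in> I)"

definition strongly_two_absorbing_ideal :: "('a, 'b) ring_scheme \<Rightarrow> 'a set \<Rightarrow> bool" where
  "strongly_two_absorbing_ideal R I \<longleftrightarrow> ideal I R \<and>
     (\<forall>I1 I2 I3. ideal I1 R \<longrightarrow> ideal I2 R \<longrightarrow> ideal I3 R \<longrightarrow>
        I1 \<cdot>\<^bsub>R\<^esub> I2 \<cdot>\<^bsub>R\<^esub> I3 \<subseteq> I \<longrightarrow>
        I1 \<cdot>\<^bsub>R\<^esub> I2 \<subseteq> I \<or> I1 \<cdot>\<^bsub>R\<^esub> I3 \<subseteq> I \<or> I2 \<cdot>\<^bsub>R\<^esub> I3 \<subseteq> I)"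

end

theory Submission
  imports Defs
begin

text \<open>For \<open>S \<subseteq> R\<close> the colon set \<open>(I : S) = {x. x S \<subseteq> I}\<close> is an additive subgroup, and no
  group is the union of two proper subgroups. If \<open>I\<close> is 2-absorbing and \<open>ab \<notin> I\<close>, every \<open>j\<close> with
  \<open>abj \<in> I\<close> lies in \<open>(I : a) \<union> (I : b)\<close>; hence an ideal \<open>J\<close> with \<open>abJ \<subseteq> I\<close> lies in one of them.
  Replacing elements by ideals one factor at a time in this way turns the elementwise
  condition into the ideal-theoretic one. Conversely, principal ideals satisfy
  \<open>(a)(b) = (ab)\<close>, so the ideal condition specialises to the elementwise one.\<close>

definition ideal_colon :: "('a, 'b) ring_scheme \<Rightarrow> 'a set \<Rightarrow> 'a set \<Rightarrow> 'a set" where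
  "ideal_colon R I S = {x \<in> carrier R. \<forall>s \<in> S. x \<otimes>\<^bsub>R\<^esub> s \<in> I}"

lemma (in abelian_group) additive_subgroup_subset_Un:
  assumes H: "additive_subgroup H G" and A: "additive_subgroup A G" and B: "additive_subgroup B G"
    and cover: "H \<subseteq> A \<union> B"
  shows "H \<subseteq> A \<or> H \<subseteq> B"
proof (rule ccontr)
  assume "\<not> ?thesis"
  then obtain x y where x: "x \<in> H" "x \<notin> A" and y: "y \<in> H" "y \<notin> B" by blast
  have xB: "x \<in> B" and yA: "y \<in> A" using x y cover by blast+
  have carr: "x \<in> carrier G" "y \<in> carrier G"
    using x y additive_subgroup.a_subset[OF H] by blast+
  have "x \<oplus> y \<in> A \<union> B" using x y cover additive_subgroup.a_closed[OF H] by blast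
  then show False
  proof
    assume "x \<oplus> y \<in> A"
    then have "(x \<oplus> y) \<oplus> \<ominus> y \<in> A"
      using yA by (simp add: additive_subgroup.a_closed[OF A] additive_subgroup.a_inv_closed[OF A])
    with carr x show False by (simp add: a_assoc r_neg)
  next
    assume "x \<oplus> y \<in> B"
    then have "\<ominus> x \<oplus> (x \<oplus> y) \<in> B"
      using xB by (simp add: additive_subgroup.a_closed[OF B] additive_subgroup.a_inv_closed[OF B])
    with carr y show False by (simp add: l_neg flip: a_assoc)
  qed
qed

lemma (in ring) additive_subgroup_ideal_colon:
  assumes I: "ideal I R" and S: "S \<subseteq> carrier R"
  shows "additive_subgroup (ideal_colon R I S) R"
proof (intro additive_subgroupI add.subgroupI)
  have I_sub: "additive_subgroup I R" using I by (rule ideal.axioms(1))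
  show "ideal_colon R I S \<subseteq> carrier R"
    by (auto simp: ideal_colon_def)
  show "ideal_colon R I S \<noteq> {}"
    using S by (auto simp: ideal_colon_def additive_subgroup.zero_closed[OF I_sub] subset_iff
        intro!: exI[of _ \<zero>])
  fix x y assume x: "x \<in> ideal_colon R I S" and y: "y \<in> ideal_colon R I S"
  show "\<ominus> x \<in> ideal_colon R I S"
    using x S by (auto simp: ideal_colon_def l_minus additive_subgroup.a_inv_closed[OF I_sub])
  show "x \<oplus> y \<in> ideal_colon R I S"
    using x y S by (auto simp: ideal_colon_def l_distr additive_subgroup.a_closed[OF I_sub])
qed

lemma (in ring) ideal_prod_subset_iff:
  assumes I: "additive_subgroup I R" and J: "ideal J R"
  shows "J \<cdot> K \<subseteq> I \<longleftrightarrow> J \<subseteq> ideal_colon R I K"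
proof
  assume "J \<cdot> K \<subseteq> I"
  then show "J \<subseteq> ideal_colon R I K"
    using ideal.Icarr[OF J] by (auto simp: ideal_colon_def intro: ideal_prod.prod)
next
  assume colon: "J \<subseteq> ideal_colon R I K"
  show "J \<cdot> K \<subseteq> I"
  proof
    fix s assume "s \<in> J \<cdot> K"
    then show "s \<in> I"
    proof (induction s rule: ideal_prod.induct)
      case (prod j k)
      then show ?case using colon by (auto simp: ideal_colon_def)
    next
      case (sum s1 s2)
      then show ?case using additive_subgroup.a_closed[OF I] by blast
    qed
  qed
qed

lemma (in cring) subset_ideal_colon_swap:
  assumes "J \<subseteq> carrier R" and "K \<subseteq> carrier R"
  shows "J \<subseteq> ideal_colon R I K \<longleftrightarrow> K \<subseteq> ideal_colon R I J"
  using assms unfolding ideal_colon_def by (auto simp: subset_iff) (metis m_comm)+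

lemma (in cring) cgenideal_ideal_prod:
  assumes a: "a \<in> carrier R" and b: "b \<in> carrier R"
  shows "(PIdl a) \<cdot> (PIdl b) = PIdl (a \<otimes> b)"
proof -
  have "(PIdl a) \<cdot> (PIdl b) = Idl ((PIdl a) <#> (PIdl b))"
    using a b by (simp add: ideal_prod_eq_genideal cgenideal_ideal)
  also have "\<dots> = PIdl (a \<otimes> b)"
  proof -
    have ab: "a \<otimes> b \<in> carrier R" using a b by simp
    have "Idl (PIdl (a \<otimes> b)) \<subseteq> PIdl (a \<otimes> b)"
      by (rule genideal_minimal[OF cgenideal_ideal[OF ab] subset_refl])
    moreover have "PIdl (a \<otimes> b) \<subseteq> Idl (PIdl (a \<otimes> b))"
      unfolding genideal_def by blast
    ultimately show ?thesis using a b by (simp add: cgenideal_prod)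
  qed
  finally show ?thesis .
qed

context cring
begin

lemma ideal_prod_subset_ideal_colon:
  assumes I: "ideal I R" and I1: "ideal I1 R" and I2: "ideal I2 R" and I3: "ideal I3 R"
    and I123: "I1 \<cdot> I2 \<cdot> I3 \<subseteq> I" and x: "x \<in> I1"
  shows "I2 \<cdot> I3 \<subseteq> ideal_colon R I {x}"
proof -
  have xc: "x \<in> carrier R" using ideal.Icarr[OF I1 x] .
  have "I2 \<subseteq> ideal_colon R (ideal_colon R I {x}) I3"
  proof (unfold ideal_colon_def, safe)
    fix j k assume j: "j \<in> I2" and k: "k \<in> I3"
    have "x \<otimes> j \<otimes> k \<in> I" using I123 x j k by (blast intro: ideal_prod.prod)
    moreover have "j \<otimes> k \<otimes> x = x \<otimes> j \<otimes> k"
      using xc ideal.Icarr[OF I2 j] ideal.Icarr[OF I3 k] by (simp add: m_ac)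
    ultimately show "j \<otimes> k \<otimes> x \<in> I" by simp
  qed (use ideal.Icarr[OF I2] ideal.Icarr[OF I3] xc in auto)
  then show ?thesis
    using ideal_prod_subset_iff[OF additive_subgroup_ideal_colon[OF I] I2] xc by blast
qed

lemma two_absorbing_ideal_colon_split:
  assumes T: "two_absorbing_ideal R I" and J: "ideal J R"
    and a: "a \<in> carrier R" and b: "b \<in> carrier R" and ab: "a \<otimes> b \<notin> I"
    and J_colon: "J \<subseteq> ideal_colon R I {a \<otimes> b}"
  shows "J \<subseteq> ideal_colon R I {a} \<or> J \<subseteq> ideal_colon R I {b}"
proof (rule abelian_group.additive_subgroup_subset_Un)
  have I: "ideal I R" using T by (simp add: two_absorbing_ideal_def)
  show "J \<subseteq> ideal_colon R I {a} \<union> ideal_colon R I {b}"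
  proof
    fix j assume j: "j \<in> J"
    then have jc: "j \<in> carrier R" by (rule ideal.Icarr[OF J])
    have "a \<otimes> b \<otimes> j \<in> I" using J_colon j a b jc by (auto simp: ideal_colon_def m_comm)
    then have "a \<otimes> j \<in> I \<or> b \<otimes> j \<in> I"
      using T a b jc ab by (auto simp: two_absorbing_ideal_def)
    then show "j \<in> ideal_colon R I {a} \<union> ideal_colon R I {b}"
      using a b jc by (auto simp: ideal_colon_def m_comm)
  qed
  show "additive_subgroup J R" using J by (rule ideal.axioms(1))
  show "additive_subgroup (ideal_colon R I {a}) R" "additive_subgroup (ideal_colon R I {b}) R"
    using I a b by (simp_all add: additive_subgroup_ideal_colon)
qed (rule is_abelian_group)

lemma two_absorbing_ideal_prod_colon_split:
  assumes T: "two_absorbing_ideal R I" and J: "ideal J R" and K: "ideal K R"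
    and a: "a \<in> carrier R" and JK_colon: "J \<cdot> K \<subseteq> ideal_colon R I {a}"
  shows "J \<subseteq> ideal_colon R I {a} \<or> K \<subseteq> ideal_colon R I {a} \<or> J \<cdot> K \<subseteq> I"
proof (cases "K \<subseteq> ideal_colon R I {a}")
  case K_not_colon: False
  have I: "ideal I R" using T by (simp add: two_absorbing_ideal_def)
  have "J \<subseteq> ideal_colon R I {a} \<or> J \<subseteq> ideal_colon R I K"
  proof (rule abelian_group.additive_subgroup_subset_Un[OF is_abelian_group])
    show "J \<subseteq> ideal_colon R I {a} \<union> ideal_colon R I K"
    proof
      fix j assume j: "j \<in> J"
      then have jc: "j \<in> carrier R" by (rule ideal.Icarr[OF J])
      show "j \<in> ideal_colon R I {a} \<union> ideal_colon R I K"
      proof (cases "j \<otimes> a \<in> I")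
        case False
        have "K \<subseteq> ideal_colon R I {j \<otimes> a}"
        proof
          fix k assume k: "k \<in> K"
          have "j \<otimes> k \<in> J \<cdot> K" using j k by (rule ideal_prod.prod)
          then have "j \<otimes> k \<otimes> a \<in> I" using JK_colon by (auto simp: ideal_colon_def)
          then show "k \<in> ideal_colon R I {j \<otimes> a}"
            using ideal.Icarr[OF K k] jc a by (simp add: ideal_colon_def m_ac)
        qed
        then have "K \<subseteq> ideal_colon R I {j}"
          using two_absorbing_ideal_colon_split[OF T K jc a False] K_not_colon by blast
        then show ?thesis
          using subset_ideal_colon_swap[of K "{j}"] ideal.Icarr[OF K] jc by blast
      qed (simp add: ideal_colon_def jc)
    qed
    show "additive_subgroup J R" using J by (rule ideal.axioms(1))
    show "additive_subgroup (ideal_colon R I {a}) R" "additive_subgroup (ideal_colon R I K) R"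
      using I a ideal.Icarr[OF K] by (auto intro!: additive_subgroup_ideal_colon)
  qed
  then show ?thesis using ideal_prod_subset_iff[OF ideal.axioms(1)[OF I] J] by blast
qed simp

lemma two_absorbing_imp_strongly_two_absorbing:
  assumes T: "two_absorbing_ideal R I"
  shows "strongly_two_absorbing_ideal R I"
  unfolding strongly_two_absorbing_ideal_def
proof (intro conjI allI impI)
  show I: "ideal I R" using T by (simp add: two_absorbing_ideal_def)
  have colon_sub: "additive_subgroup (ideal_colon R I S) R" if "S \<subseteq> carrier R" for S
    using I that by (rule additive_subgroup_ideal_colon)
  fix I1 I2 I3 assume I1: "ideal I1 R" and I2: "ideal I2 R" and I3: "ideal I3 R"
    and I123: "I1 \<cdot> I2 \<cdot> I3 \<subseteq> I"
  have carr: "I1 \<subseteq> carrier R" "I2 \<subseteq> carrier R" "I3 \<subseteq> carrier R"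
    using I1 I2 I3 by (simp_all add: ideal.Icarr subsetI)
  show "I1 \<cdot> I2 \<subseteq> I \<or> I1 \<cdot> I3 \<subseteq> I \<or> I2 \<cdot> I3 \<subseteq> I"
  proof (cases "I2 \<cdot> I3 \<subseteq> I")
    case I23: False
    have "I1 \<subseteq> ideal_colon R I I2 \<or> I1 \<subseteq> ideal_colon R I I3"
    proof (rule abelian_group.additive_subgroup_subset_Un[OF is_abelian_group])
      show "I1 \<subseteq> ideal_colon R I I2 \<union> ideal_colon R I I3"
      proof
        fix x assume x: "x \<in> I1"
        have xc: "x \<in> carrier R" using x carr by blast
        have "I2 \<cdot> I3 \<subseteq> ideal_colon R I {x}"
          using ideal_prod_subset_ideal_colon[OF I I1 I2 I3 I123 x] .
        then have "I2 \<subseteq> ideal_colon R I {x} \<or> I3 \<subseteq> ideal_colon R I {x}"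
          using two_absorbing_ideal_prod_colon_split[OF T I2 I3 xc] I23 by blast
        then show "x \<in> ideal_colon R I I2 \<union> ideal_colon R I I3"
          using subset_ideal_colon_swap[of _ "{x}"] carr xc by blast
      qed
      show "additive_subgroup I1 R" using I1 by (rule ideal.axioms(1))
      show "additive_subgroup (ideal_colon R I I2) R" "additive_subgroup (ideal_colon R I I3) R"
        using carr by (simp_all add: colon_sub)
    qed
    then show ?thesis using ideal_prod_subset_iff[OF ideal.axioms(1)[OF I] I1] by blast
  qed simp
qed

lemma strongly_two_absorbing_imp_two_absorbing:
  assumes S: "strongly_two_absorbing_ideal R I"
  shows "two_absorbing_ideal R I"
  unfolding two_absorbing_ideal_def
proof (intro conjI ballI impI)
  show I: "ideal I R" using S by (simp add: strongly_two_absorbing_ideal_def)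
  fix a b c assume a: "a \<in> carrier R" and b: "b \<in> carrier R" and c: "c \<in> carrier R"
    and abc: "a \<otimes> b \<otimes> c \<in> I"
  have "(PIdl a) \<cdot> (PIdl b) \<cdot> (PIdl c) \<subseteq> I"
    using a b c abc by (simp add: cgenideal_ideal_prod cgenideal_minimal[OF I])
  then have "(PIdl a) \<cdot> (PIdl b) \<subseteq> I \<or> (PIdl a) \<cdot> (PIdl c) \<subseteq> I \<or> (PIdl b) \<cdot> (PIdl c) \<subseteq> I"
    using S a b c cgenideal_ideal unfolding strongly_two_absorbing_ideal_def by blast
  then show "a \<otimes> b \<in> I \<or> a \<otimes> c \<in> I \<or> b \<otimes> c \<in> I"
    using a b c cgenideal_self[of "a \<otimes> b"] cgenideal_self[of "a \<otimes> c"] cgenideal_self[of "b \<otimes> c"]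
    by (auto simp: cgenideal_ideal_prod)
qed

end

theorem theorem2p13:
  fixes R :: "('a, 'b) ring_scheme" and I :: "'a set"
  assumes "cring R" and "\<one>\<^bsub>R\<^esub> \<noteq> \<zero>\<^bsub>R\<^esub>" and "ideal I R"
  shows "two_absorbing_ideal R I \<longleftrightarrow> strongly_two_absorbing_ideal R I"
  \<comment> \<open>Neither direction needs \<open>\<one> \<noteq> \<zero>\<close>.\<close>
  using cring.two_absorbing_imp_strongly_two_absorbing[OF assms(1)]
    cring.strongly_two_absorbing_imp_two_absorbing[OF assms(1)] by blast

end
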